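(* Let $m\geq1$ and for $n\geq 0$ let $h_n$ be the number of $(2m+1)$-historic trees on $n+m$ vertices. Then the exponential generating function $H(x)=\sum_{n\geq0}h_n\frac{x^n}{n!}$ satisfies, as a formal power series, \[ H^{(m+1)}(x)=H(x)^2,\qquad H(0)=H'(0)=\cdots=H^{(m)}(0)=1. \]
   Context: A $(2m+1)$-historic tree on $N$ vertices is a rooted plane tree whose vertices are labelled bijectively by $\{1,\dots,N\}$ with labels increasing along every path from the root to a leaf, such that (root at height $0$) the vertices at heights $2m,3m+1,4m+2,\dots$ (i.e. $2m+j(m+1)$, $j\geq0$), called branchings, have two ordered child slots (left and right), each of which may or may not be occupied, while all other vertices have a single child slot (at most one child). Two such trees are equal if they agree as labelled plane trees, with a single child of a branching distinguished as left or right. *)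

theory Defs
  imports "HOL-Computational_Algebra.Formal_Power_Series"
begin

(* A vertex: label, left child slot, right child slot.
   Non-branching vertices use only the left slot (right slot must be None),
   so a single child of a non-branching vertex is encoded canonically. *)
datatype htree = Node nat "htree option" "htree option"

fun root_label :: "htree \<Rightarrow> nat" where
  "root_label (Node l a b) = l"

fun labels :: "htree \<Rightarrow> nat list" where
  "labels (Node l a b) =
     l # (case a of None \<Rightarrow> [] | Some t \<Rightarrow> labels t)
       @ (case b of None \<Rightarrow> [] | Some t \<Rightarrow> labels t)"

definition branching :: "nat \<Rightarrow> nat \<Rightarrow> bool" where
  "branching m h \<longleftrightarrow> 2*m \<le> h \<and> (h - 2*m) mod (m+1) = 0"

fun hist_shape :: "nat \<Rightarrow> nat \<Rightarrow> htree \<Rightarrow> bool" where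
  "hist_shape m h (Node l a b) =
     ((branching m h \<or> b = None)
      \<and> (case a of None \<Rightarrow> True | Some t \<Rightarrow> l < root_label t \<and> hist_shape m (Suc h) t)
      \<and> (case b of None \<Rightarrow> True | Some t \<Rightarrow> l < root_label t \<and> hist_shape m (Suc h) t))"

definition historic_trees :: "nat \<Rightarrow> nat \<Rightarrow> htree set" where
  "historic_trees m N = {t. hist_shape m 0 t \<and> distinct (labels t) \<and> set (labels t) = {1..N}}"

definition hist_count :: "nat \<Rightarrow> nat \<Rightarrow> nat" where
  "hist_count m n = card (historic_trees m (n + m))"

definition hist_egf :: "nat \<Rightarrow> real fps" where
  "hist_egf m = Abs_fps (\<lambda>n. of_nat (hist_count m n) / fact n)"

end

theory Submission
  imports Defs
begin

text \<open>The smallest label of an increasing tree sits at its root, and the remaining labels are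
  split between the two child slots, in a binomial number of ways at a branching and
  trivially elsewhere. Hence the number of fillings of a child slot at height \<open>h\<close> by \<open>n\<close>
  labels depends only on \<open>h\<close> and \<open>n\<close>. Below height \<open>2m\<close> there are no branchings, and from
  height \<open>m\<close> on the branching heights are periodic with period \<open>m+1\<close>; so each child of the
  first branching behaves like a slot at height \<open>m\<close>, that is, like a whole tree with its
  first \<open>m\<close> vertices removed. This yields
  \<open>h (n+m+1) = (\<Sum>k\<le>n. (n choose k) * h k * h (n-k))\<close>, which says coefficientwise that the
  \<open>(m+1)\<close>-st derivative of \<open>H\<close> is \<open>H\<^sup>2\<close>; the initial values hold because trees on at most \<open>2m\<close> vertices are paths.\<close>

lemma fps_deriv_iterate_egf:
  "(fps_deriv ^^ k) (Abs_fps (\<lambda>n. a n / fact n)) = Abs_fps (\<lambda>n. (a (n + k) :: 'a :: field_char_0) / fact n)"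
proof (induction k)
  case (Suc k)
  have "fps_deriv (Abs_fps (\<lambda>n. a (n + k) / fact n)) = Abs_fps (\<lambda>n. a (n + Suc k) / fact n)"
    by (rule fps_ext) (simp add: field_simps del: of_nat_Suc)
  then show ?case using Suc by simp
qed simp

lemma egf_mult:
  "Abs_fps (\<lambda>n. a n / fact n) * Abs_fps (\<lambda>n. b n / fact n)
     = Abs_fps (\<lambda>n. (\<Sum>k\<le>n. of_nat (n choose k) * a k * b (n - k)) / (fact n :: 'a :: field_char_0))"
proof (rule fps_ext)
  fix n
  have "a k / fact k * (b (n - k) / fact (n - k)) = of_nat (n choose k) * a k * b (n - k) / fact n"
    if "k \<le> n" for k
    using that by (simp add: binomial_fact field_simps)
  then show "fps_nth (Abs_fps (\<lambda>n. a n / fact n) * Abs_fps (\<lambda>n. b n / fact n)) n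
      = fps_nth (Abs_fps (\<lambda>n. (\<Sum>k\<le>n. of_nat (n choose k) * a k * b (n - k)) / fact n)) n"
    by (simp add: fps_mult_nth atLeast0AtMost sum_divide_distrib)
qed

lemma sum_Pow_by_card:
  assumes "finite A"
  shows "(\<Sum>L\<in>Pow A. f (card L)) = (\<Sum>k\<le>card A. (card A choose k) * (f k :: nat))"
proof -
  have "card ` Pow A \<subseteq> {..card A}" using assms by (auto intro: card_mono)
  then have "(\<Sum>L\<in>Pow A. f (card L)) = (\<Sum>k\<le>card A. \<Sum>L\<in>{L \<in> Pow A. card L = k}. f k)"
    using sum.group[of "Pow A" "{..card A}" card "\<lambda>L. f (card L)"] assms
    by (simp add: sum.cong[OF refl, of "{L \<in> Pow A. card L = _}"])
  also have "\<dots> = (\<Sum>k\<le>card A. (card A choose k) * f k)"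
    using n_subsets[OF assms] by (simp add: Pow_def)
  finally show ?thesis .
qed

fun slot_labels :: "htree option \<Rightarrow> nat list" where
  "slot_labels None = []"
| "slot_labels (Some t) = labels t"

definition hist_subtrees :: "nat \<Rightarrow> nat \<Rightarrow> nat set \<Rightarrow> htree set" where
  "hist_subtrees m h A = {t. hist_shape m h t \<and> distinct (labels t) \<and> set (labels t) = A}"

definition hist_slots :: "nat \<Rightarrow> nat \<Rightarrow> nat set \<Rightarrow> htree option set" where
  "hist_slots m h A = (if A = {} then {None} else Some ` hist_subtrees m h A)"

definition child_slots :: "nat \<Rightarrow> nat \<Rightarrow> nat set \<Rightarrow> (htree option \<times> htree option) set" where
  "child_slots m h B =
     {p \<in> (\<Union>L\<in>Pow B. hist_slots m (Suc h) L \<times> hist_slots m (Suc h) (B - L)).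
        branching m h \<or> snd p = None}"

lemma labels_Node [simp]: "labels (Node l x y) = l # slot_labels x @ slot_labels y"
  by (cases x; cases y) auto

declare labels.simps [simp del]

lemma labels_neq_Nil: "labels t \<noteq> []"
  by (cases t) simp

lemma root_label_in_labels: "root_label t \<in> set (labels t)"
  by (cases t) simp

lemma hist_shape_root_label_le: "hist_shape m h t \<Longrightarrow> z \<in> set (labels t) \<Longrightarrow> root_label t \<le> z"
proof (induction t arbitrary: h)
  case (Node l x y)
  then show ?case by (cases x; cases y) (auto, (metis less_imp_le order.strict_trans2)+)
qed

lemma mem_hist_slots_iff:
  "x \<in> hist_slots m h A \<longleftrightarrow>
     set (slot_labels x) = A \<and> distinct (slot_labels x) \<and> (\<forall>t. x = Some t \<longrightarrow> hist_shape m h t)"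
  by (cases x) (auto simp: hist_slots_def hist_subtrees_def labels_neq_Nil)

lemma hist_shape_Node_iff:
  assumes "\<forall>z \<in> set (slot_labels x @ slot_labels y). l < z"
  shows "hist_shape m h (Node l x y) \<longleftrightarrow> (branching m h \<or> y = None)
           \<and> (\<forall>t. x = Some t \<longrightarrow> hist_shape m (Suc h) t) \<and> (\<forall>t. y = Some t \<longrightarrow> hist_shape m (Suc h) t)"
  using assms root_label_in_labels by (cases x; cases y) auto

lemma Node_mem_hist_subtrees_iff:
  assumes "finite A"
  shows "Node l x y \<in> hist_subtrees m h A \<longleftrightarrow>
           l \<in> A \<and> l = Min A \<and> (x, y) \<in> child_slots m h (A - {l})"
proof
  assume t: "Node l x y \<in> hist_subtrees m h A"
  then have shape: "hist_shape m h (Node l x y)"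
    and dist: "distinct (l # slot_labels x @ slot_labels y)"
    and lab: "set (l # slot_labels x @ slot_labels y) = A"
    by (simp_all add: hist_subtrees_def)
  have "l \<le> z" if "z \<in> A" for z
    using hist_shape_root_label_le[OF shape, of z] that lab by auto
  then have "l = Min A" using lab assms by (intro Min_eqI[symmetric]) auto
  moreover have "\<forall>z \<in> set (slot_labels x @ slot_labels y). l < z"
    using \<open>l = Min A\<close> dist lab assms by (metis Min_le distinct.simps(2) le_neq_implies_less list.set_intros(2))
  ultimately show "l \<in> A \<and> l = Min A \<and> (x, y) \<in> child_slots m h (A - {l})"
    using shape dist lab hist_shape_Node_iff[of x y l m h]
    by (auto simp: child_slots_def mem_hist_slots_iff intro!: bexI[of _ "set (slot_labels x)"])
next
  assume "l \<in> A \<and> l = Min A \<and> (x, y) \<in> child_slots m h (A - {l})"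
  then obtain L where l: "l \<in> A" "l = Min A" and L: "L \<subseteq> A - {l}"
    and x: "x \<in> hist_slots m (Suc h) L" and y: "y \<in> hist_slots m (Suc h) (A - {l} - L)"
    and br: "branching m h \<or> y = None"
    by (auto simp: child_slots_def)
  have "\<forall>z \<in> set (slot_labels x @ slot_labels y). l < z"
    using l L x y assms by (auto simp: mem_hist_slots_iff dest: Min_le intro: le_neq_implies_less)
  then show "Node l x y \<in> hist_subtrees m h A"
    using l L x y br hist_shape_Node_iff[of x y l m h]
    by (auto simp: hist_subtrees_def mem_hist_slots_iff)
qed

lemma hist_subtrees_eq_image:
  assumes "finite A" "A \<noteq> {}"
  shows "hist_subtrees m h A = (\<lambda>(x, y). Node (Min A) x y) ` child_slots m h (A - {Min A})"
proof (intro equalityI subsetI)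
  fix t assume "t \<in> hist_subtrees m h A"
  moreover obtain l x y where "t = Node l x y" by (cases t)
  ultimately show "t \<in> (\<lambda>(x, y). Node (Min A) x y) ` child_slots m h (A - {Min A})"
    using Node_mem_hist_subtrees_iff[OF assms(1)] by force
next
  fix t assume "t \<in> (\<lambda>(x, y). Node (Min A) x y) ` child_slots m h (A - {Min A})"
  then show "t \<in> hist_subtrees m h A"
    using Node_mem_hist_subtrees_iff[OF assms(1)] Min_in[OF assms] by auto
qed

fun slot_count :: "nat \<Rightarrow> nat \<Rightarrow> nat \<Rightarrow> nat" where
  "slot_count m h 0 = 1"
| "slot_count m h (Suc n) = (if branching m h
     then (\<Sum>k\<le>n. (n choose k) * slot_count m (Suc h) k * slot_count m (Suc h) (n - k))
     else slot_count m (Suc h) n)"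

lemma card_child_slots:
  assumes "finite B"
    and slots: "\<And>L. L \<subseteq> B \<Longrightarrow> finite (hist_slots m (Suc h) L)
                   \<and> card (hist_slots m (Suc h) L) = slot_count m (Suc h) (card L)"
  shows "finite (child_slots m h B) \<and> card (child_slots m h B) = slot_count m h (Suc (card B))"
proof (cases "branching m h")
  case True
  define S where "S L = hist_slots m (Suc h) L \<times> hist_slots m (Suc h) (B - L)" for L
  have eq: "child_slots m h B = (\<Union>L\<in>Pow B. S L)"
    using True by (auto simp: child_slots_def S_def)
  have fin: "finite (S L)" if "L \<in> Pow B" for L
    using slots[of L] slots[of "B - L"] that by (auto simp: S_def)
  have disj: "S L \<inter> S L' = {}" if "L \<noteq> L'" for L L'
    using that by (auto simp: S_def mem_hist_slots_iff)
  have "card (\<Union>L\<in>Pow B. S L) = (\<Sum>L\<in>Pow B. card (S L))"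
    using assms(1) fin disj by (intro card_UN_disjoint) auto
  also have "\<dots> = (\<Sum>L\<in>Pow B. slot_count m (Suc h) (card L) * slot_count m (Suc h) (card B - card L))"
    using slots assms(1)
    by (intro sum.cong) (auto simp: S_def card_cartesian_product card_Diff_subset finite_subset)
  also have "\<dots> = slot_count m h (Suc (card B))"
    using True sum_Pow_by_card[OF assms(1),
        of "\<lambda>k. slot_count m (Suc h) k * slot_count m (Suc h) (card B - k)"]
    by (simp add: mult.assoc)
  finally show ?thesis using eq fin assms(1) by simp
next
  case False
  have "child_slots m h B = hist_slots m (Suc h) B \<times> {None}"
    using False by (auto simp: child_slots_def mem_hist_slots_iff)
  then show ?thesis using False slots[of B] by (simp add: card_cartesian_product)
qed

lemma card_hist_slots:
  "finite A \<Longrightarrow> finite (hist_slots m h A) \<and> card (hist_slots m h A) = slot_count m h (card A)"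
proof (induction "card A" arbitrary: A h rule: less_induct)
  case less
  show ?case
  proof (cases "A = {}")
    case False
    define B where "B = A - {Min A}"
    have cardA: "card A = Suc (card B)"
      using less.prems False by (simp add: B_def Min_in card_gt_0_iff)
    have "finite (hist_slots m (Suc h) L) \<and> card (hist_slots m (Suc h) L) = slot_count m (Suc h) (card L)"
      if "L \<subseteq> B" for L
      using that less cardA card_mono[of B L] by (simp add: B_def finite_subset)
    then have "finite (child_slots m h B) \<and> card (child_slots m h B) = slot_count m h (card A)"
      using card_child_slots[of B m h] less.prems cardA by (simp add: B_def)
    moreover have "hist_slots m h A = (\<lambda>(x, y). Some (Node (Min A) x y)) ` child_slots m h B"
      using hist_subtrees_eq_image[OF less.prems False] False by (simp add: hist_slots_def B_def image_image case_prod_unfold)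
    moreover have "inj_on (\<lambda>(x, y). Some (Node (Min A) x y)) (child_slots m h B)"
      by (auto simp: inj_on_def)
    ultimately show ?thesis by (simp add: card_image)
  qed (simp add: hist_slots_def)
qed

lemma hist_count_eq_slot_count:
  assumes "m \<ge> 1"
  shows "hist_count m n = slot_count m 0 (n + m)"
proof -
  have "hist_slots m 0 {1..n+m} = Some ` historic_trees m (n + m)"
    using assms by (simp add: hist_slots_def hist_subtrees_def historic_trees_def)
  then show ?thesis
    using card_hist_slots[of "{1..n+m}" m 0] by (simp add: hist_count_def card_image)
qed

lemma not_branching_below: "h < 2*m \<Longrightarrow> \<not> branching m h"
  by (simp add: branching_def)

lemma branching_add_period:
  assumes "m \<le> h"
  shows "branching m (h + (m+1)) \<longleftrightarrow> branching m h"
proof (cases "2*m \<le> h")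
  case True
  then have "h + (m+1) - 2*m = (h - 2*m) + (m+1)" by linarith
  then have "(h + (m+1) - 2*m) mod (m+1) = (h - 2*m) mod (m+1)" by (simp only: mod_add_self2)
  then show ?thesis using True by (simp only: branching_def) simp
next
  case False
  then have "h + (m+1) - 2*m < m+1" "h + (m+1) - 2*m \<noteq> 0" using assms by simp_all
  then show ?thesis using False by (simp add: branching_def)
qed

lemma slot_count_below_first_branching: "h + n \<le> 2*m \<Longrightarrow> slot_count m h n = 1"
  by (induction n arbitrary: h) (simp_all add: not_branching_below)

lemma slot_count_shift: "h + j \<le> 2*m \<Longrightarrow> slot_count m h (n + j) = slot_count m (h + j) n"
  by (induction j arbitrary: h) (simp_all add: not_branching_below)

lemma slot_count_periodic: "m \<le> h \<Longrightarrow> slot_count m (h + (m+1)) n = slot_count m h n"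
proof (induction m h n rule: slot_count.induct)
  case (2 m h n)
  then show ?case using branching_add_period[of m h] by simp
qed simp

lemma slot_count_recurrence:
  "slot_count m 0 (n + 2*m + 1) = (\<Sum>k\<le>n. (n choose k) * slot_count m 0 (k + m) * slot_count m 0 (n - k + m))"
proof -
  have child: "slot_count m (Suc (2*m)) k = slot_count m 0 (k + m)" for k
  proof -
    have "Suc (2*m) = m + (m+1)" by simp
    then have "slot_count m (Suc (2*m)) k = slot_count m (m + (m+1)) k" by (simp only:)
    also have "\<dots> = slot_count m m k" by (rule slot_count_periodic) simp
    also have "\<dots> = slot_count m 0 (k + m)" using slot_count_shift[of 0 m m k] by simp
    finally show ?thesis .
  qed
  have "slot_count m 0 (n + 2*m + 1) = slot_count m (2*m) (Suc n)"
    using slot_count_shift[of 0 "2*m" m "Suc n"] by simp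
  also have "\<dots> = (\<Sum>k\<le>n. (n choose k) * slot_count m (Suc (2*m)) k * slot_count m (Suc (2*m)) (n - k))"
    by (simp add: branching_def)
  finally show ?thesis by (simp only: child)
qed

theorem mainTheorem8:
  fixes m :: nat
  assumes "m \<ge> 1"
  shows "(fps_deriv ^^ (m+1)) (hist_egf m) = (hist_egf m)^2
         \<and> (\<forall>k\<le>m. fps_nth ((fps_deriv ^^ k) (hist_egf m)) 0 = 1)"
proof -
  define a where "a n = real (slot_count m 0 (n + m))" for n
  have H: "hist_egf m = Abs_fps (\<lambda>n. a n / fact n)"
    using assms by (simp add: hist_egf_def hist_count_eq_slot_count a_def)
  have "a (n + (m+1)) = (\<Sum>k\<le>n. of_nat (n choose k) * a k * a (n - k))" for n
  proof -
    have "n + (m+1) + m = n + 2*m + 1" by simp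
    then show ?thesis by (simp only: a_def slot_count_recurrence) simp
  qed
  then have "(fps_deriv ^^ (m+1)) (hist_egf m) = (hist_egf m)^2"
    by (simp only: H fps_deriv_iterate_egf power2_eq_square egf_mult)
  moreover have "fps_nth ((fps_deriv ^^ k) (hist_egf m)) 0 = 1" if "k \<le> m" for k
    using that slot_count_below_first_branching[of 0 "k + m" m]
    by (simp add: H fps_deriv_iterate_egf a_def)
  ultimately show ?thesis by blast
qed

end
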